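(* Let $A$ be a real $n\times n$ matrix and $\mathbf{c},\mathbf{d}\in\mathbb{R}^n$ with $A+A^T=\mathbf{c}\mathbf{d}^T$, and let $K=A-\tfrac12\mathbf{c}\mathbf{d}^T$. Let $\lambda\in\mathbb{R}$ and let $(\mathbf{x},\pi)$ be an optimal solution of $LP(\lambda)$. Then for every $\mathbf{v}\in\mathbb{R}^n$ with $\mathbf{v}^T\mathbf{x}=\lambda$, the probability vector $\mathbf{x}$ is a symmetric Nash equilibrium of the bimatrix game $(Z,Z^T)$, where $Z=K+\tfrac12\mathbf{c}\mathbf{v}^T$.
   Context: For fixed $\lambda\in\mathbb{R}$, $LP(\lambda)$ is the linear program in variables $\mathbf{x}\in\mathbb{R}^n,\pi\in\mathbb{R}$: maximize $\tfrac12\lambda\,\mathbf{x}^T\mathbf{c}-\pi$ subject to $K\mathbf{x}+\tfrac{\lambda}{2}\mathbf{c}\le\pi\mathbf{1}$ (componentwise), $\mathbf{x}\ge0$, $\sum_ix_i=1$; $\mathbf{1}$ is the all-ones vector. For a square matrix $Z$, a probability vector $\mathbf{x}$ is a symmetric Nash equilibrium of $(Z,Z^T)$ if $(\mathbf{x},\mathbf{x})$ is a Nash equilibrium, equivalently, $x_i>0$ implies $(Z\mathbf{x})_i=\max_k(Z\mathbf{x})_k$. *)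

theory Defs
  imports "HOL-Analysis.Analysis"
begin

definition outer :: "real^'n \<Rightarrow> real^'n \<Rightarrow> real^'n^'n" where
  "outer c d = (\<chi> i j. c $ i * d $ j)"

definition prob_vec :: "real^'n \<Rightarrow> bool" where
  "prob_vec x \<longleftrightarrow> (\<forall>i. x $ i \<ge> 0) \<and> sum (\<lambda>i. x $ i) UNIV = 1"

definition LP_feasible :: "real^'n^'n \<Rightarrow> real^'n \<Rightarrow> real \<Rightarrow> real^'n \<Rightarrow> real \<Rightarrow> bool" where
  "LP_feasible K c lam x p \<longleftrightarrow>
     (\<forall>i. (K *v x) $ i + lam / 2 * c $ i \<le> p) \<and> prob_vec x"

definition LP_objective :: "real^'n \<Rightarrow> real \<Rightarrow> real^'n \<Rightarrow> real \<Rightarrow> real" where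
  "LP_objective c lam x p = lam / 2 * (x \<bullet> c) - p"

definition LP_optimal :: "real^'n^'n \<Rightarrow> real^'n \<Rightarrow> real \<Rightarrow> real^'n \<Rightarrow> real \<Rightarrow> bool" where
  "LP_optimal K c lam x p \<longleftrightarrow> LP_feasible K c lam x p \<and>
     (\<forall>x' p'. LP_feasible K c lam x' p' \<longrightarrow> LP_objective c lam x' p' \<le> LP_objective c lam x p)"

definition nash_eq :: "real^'n^'n \<Rightarrow> real^'n^'n \<Rightarrow> real^'n \<Rightarrow> real^'n \<Rightarrow> bool" where
  "nash_eq A B x y \<longleftrightarrow> prob_vec x \<and> prob_vec y \<and>
     (\<forall>x'. prob_vec x' \<longrightarrow> x' \<bullet> (A *v y) \<le> x \<bullet> (A *v y)) \<and>
     (\<forall>y'. prob_vec y' \<longrightarrow> x \<bullet> (B *v y') \<le> x \<bullet> (B *v y))"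

definition symmetric_nash :: "real^'n^'n \<Rightarrow> real^'n \<Rightarrow> bool" where
  "symmetric_nash Z x \<longleftrightarrow> nash_eq Z (transpose Z) x x"

end

theory Submission
  imports Defs
begin

text \<open>Since \<open>A + A\<^sup>T = c d\<^sup>T\<close>, the quadratic form of \<open>K\<close> vanishes.  Applying Brouwer's
  theorem to Nash's map for the field \<open>g y = K y + (\<lambda>/2) c - (\<lambda>/2)(y\<^sup>T c) 1\<close>, which is
  orthogonal to every \<open>y\<close> on the simplex, yields a feasible point of \<open>LP(\<lambda>)\<close> with objective
  value \<open>0\<close>; hence an optimal \<open>(x, \<pi>)\<close> has \<open>\<pi> \<le> (\<lambda>/2) x\<^sup>T c\<close>.  For \<open>v\<^sup>T x = \<lambda>\<close> we have
  \<open>Z x = K x + (\<lambda>/2) c \<le> \<pi> 1\<close> and \<open>x\<^sup>T Z x = (\<lambda>/2) x\<^sup>T c \<ge> \<pi>\<close>, so \<open>x\<close> is a best response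
  to itself.\<close>

lemma compact_prob_vec: "compact {x::real^'n. prob_vec x}"
proof -
  have eq: "{x::real^'n. prob_vec x} = (\<Inter>i. {x. 0 \<le> x $ i}) \<inter> {x. sum (\<lambda>i. x $ i) UNIV = 1}"
    by (auto simp: prob_vec_def)
  have "closed {x::real^'n. 0 \<le> x $ i}" for i
    by (rule closed_Collect_le) (auto intro: continuous_intros)
  then have "closed {x::real^'n. prob_vec x}"
    unfolding eq by (intro closed_Int closed_INT closed_Collect_eq continuous_intros) auto
  moreover have "norm x \<le> 1" if "prob_vec x" for x :: "real^'n"
  proof -
    have "norm x \<le> sum (\<lambda>i. \<bar>x $ i\<bar>) UNIV" by (rule norm_le_l1_cart)
    also have "\<dots> = 1" using that by (simp add: prob_vec_def)
    finally show ?thesis .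
  qed
  then have "bounded {x::real^'n. prob_vec x}"
    unfolding bounded_iff by blast
  ultimately show ?thesis using compact_eq_bounded_closed by blast
qed

lemma convex_prob_vec: "convex {x::real^'n. prob_vec x}"
  unfolding convex_def prob_vec_def
  by (auto simp: sum.distrib sum_distrib_left[symmetric])

lemma prob_vec_axis: "prob_vec (axis k (1::real))"
  by (auto simp: prob_vec_def axis_def)

lemma prob_vec_inner_one: "prob_vec y \<Longrightarrow> y \<bullet> 1 = 1"
  by (simp add: prob_vec_def inner_vec_def)

lemma prob_vec_inner_le:
  assumes "prob_vec y" and "\<And>i. u $ i \<le> a"
  shows "y \<bullet> u \<le> a"
proof -
  have "y \<bullet> u = (\<Sum>i\<in>UNIV. y $ i * u $ i)" by (simp add: inner_vec_def)
  also have "\<dots> \<le> (\<Sum>i\<in>UNIV. y $ i * a)"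
    using assms by (intro sum_mono mult_left_mono) (auto simp: prob_vec_def)
  also have "\<dots> = a" using assms(1) by (simp add: prob_vec_def sum_distrib_right[symmetric])
  finally show ?thesis .
qed

text \<open>Nash's map \<open>f x = (x + g\<^sup>+ x) / (1 + \<Sum>\<^sub>j g\<^sup>+\<^sub>j x)\<close> has a fixed point \<open>x\<close>; there
  \<open>g\<^sup>+ x = s x\<close> with \<open>s = \<Sum>\<^sub>j g\<^sup>+\<^sub>j x\<close>, so \<open>\<Sum>\<^sub>i (g\<^sup>+\<^sub>i x)\<^sup>2 = s (x \<bullet> g x) = 0\<close>.\<close>
lemma prob_vec_orthogonal_field_nonpos:
  fixes g :: "real^'n \<Rightarrow> real^'n"
  assumes cont: "continuous_on {x. prob_vec x} g"
    and orth: "\<And>x. prob_vec x \<Longrightarrow> x \<bullet> g x = 0"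
  shows "\<exists>x. prob_vec x \<and> (\<forall>i. g x $ i \<le> 0)"
proof -
  define S where "S = {x::real^'n. prob_vec x}"
  define s where "s x = (\<Sum>j\<in>UNIV. max 0 (g x $ j))" for x
  define f where "f x = (\<chi> i. (x $ i + max 0 (g x $ i)) / (1 + s x))" for x
  have s_nonneg: "s x \<ge> 0" for x unfolding s_def by (intro sum_nonneg) auto
  have "continuous_on S f"
    unfolding f_def S_def using s_nonneg unfolding s_def
    by (intro continuous_intros cont) (auto simp: add_nonneg_eq_0_iff)
  moreover have "f \<in> S \<rightarrow> S"
  proof
    fix x assume "x \<in> S"
    then have x: "prob_vec x" by (simp add: S_def)
    have "sum (\<lambda>i. f x $ i) UNIV = (\<Sum>i\<in>UNIV. x $ i + max 0 (g x $ i)) / (1 + s x)"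
      by (simp add: f_def sum_divide_distrib)
    also have "\<dots> = 1"
      using x s_nonneg[of x] by (simp add: sum.distrib prob_vec_def s_def)
    finally show "f x \<in> S"
      using x s_nonneg[of x] by (auto simp: S_def f_def prob_vec_def)
  qed
  ultimately obtain x where "x \<in> S" and fix_x: "f x = x"
    using brouwer[of S f] compact_prob_vec convex_prob_vec prob_vec_axis
    unfolding S_def by blast
  then have x: "prob_vec x" by (simp add: S_def)
  have pos_part: "max 0 (g x $ i) = s x * x $ i" for i
  proof -
    have "(x $ i + max 0 (g x $ i)) / (1 + s x) = x $ i"
      using fix_x by (metis f_def vec_lambda_beta)
    then show ?thesis using s_nonneg[of x] by (simp add: field_simps)
  qed
  have "(\<Sum>i\<in>UNIV. (max 0 (g x $ i))\<^sup>2) = (\<Sum>i\<in>UNIV. s x * (x $ i * g x $ i))"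
  proof (rule sum.cong)
    fix i
    have "(max 0 (g x $ i))\<^sup>2 = max 0 (g x $ i) * g x $ i"
      by (simp add: power2_eq_square max_def)
    then show "(max 0 (g x $ i))\<^sup>2 = s x * (x $ i * g x $ i)" by (simp add: pos_part)
  qed simp
  also have "\<dots> = s x * (x \<bullet> g x)" by (simp add: inner_vec_def sum_distrib_left)
  also have "\<dots> = 0" using orth[OF x] by simp
  finally have "\<forall>i\<in>UNIV. (max 0 (g x $ i))\<^sup>2 = 0"
    by (subst sum_nonneg_eq_0_iff[symmetric]) auto
  then have "max 0 (g x $ i) = 0" for i by simp
  then have "\<forall>i. g x $ i \<le> 0" by (metis max.cobounded2)
  with x show ?thesis by blast
qed

lemma outer_mult_vec: "outer a b *v y = (b \<bullet> y) *\<^sub>R a"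
  by (simp add: outer_def matrix_vector_mult_def inner_vec_def sum_distrib_left vec_eq_iff
      algebra_simps)

lemma inner_skew_part_mult_vec_self_eq_0:
  fixes A B :: "real^'n^'n"
  assumes "A + transpose A = B"
  shows "y \<bullet> ((A - (1/2) *\<^sub>R B) *v y) = 0"
proof -
  have "y \<bullet> (transpose A *v y) = y \<bullet> (A *v y)"
    using dot_lmul_matrix[of y A y] by (simp add: inner_commute)
  then have "y \<bullet> (B *v y) = 2 * (y \<bullet> (A *v y))"
    using assms[symmetric] by (simp add: matrix_vector_mult_add_rdistrib inner_add_right)
  then show ?thesis
    by (simp add: matrix_vector_mult_diff_rdistrib scaleR_matrix_vector_assoc[symmetric]
        inner_diff_right)
qed

lemma LP_optimal_value_bound:
  assumes K: "\<And>y. y \<bullet> (K *v y) = 0"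
    and opt: "LP_optimal K c lam x p"
  shows "p \<le> lam / 2 * (x \<bullet> c)"
proof -
  define g where "g y = K *v y + (lam/2) *\<^sub>R c - (lam/2 * (y \<bullet> c)) *\<^sub>R 1" for y
  have "continuous_on {y. prob_vec y} (\<lambda>y. K *v y)"
    using matrix_vector_mul_linear linear_conv_bounded_linear linear_continuous_on by blast
  then have "continuous_on {y. prob_vec y} g"
    unfolding g_def by (intro continuous_intros)
  moreover have "y \<bullet> g y = 0" if "prob_vec y" for y
    using K[of y] prob_vec_inner_one[OF that]
    by (simp add: g_def inner_diff_right inner_add_right inner_commute)
  ultimately obtain y where y: "prob_vec y" and "\<forall>i. g y $ i \<le> 0"
    using prob_vec_orthogonal_field_nonpos by blast
  then have "LP_feasible K c lam y (lam/2 * (y \<bullet> c))"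
    by (simp add: LP_feasible_def g_def)
  then have "LP_objective c lam y (lam/2 * (y \<bullet> c)) \<le> LP_objective c lam x p"
    using opt by (simp add: LP_optimal_def)
  then show ?thesis by (simp add: LP_objective_def inner_commute)
qed

lemma symmetric_nashI:
  assumes "prob_vec x" and "\<And>i. (Z *v x) $ i \<le> x \<bullet> (Z *v x)"
  shows "symmetric_nash Z x"
proof -
  have "x \<bullet> (transpose Z *v y) = y \<bullet> (Z *v x)" for y
    using dot_lmul_matrix[of y Z x] by (simp add: inner_commute)
  then show ?thesis
    using assms prob_vec_inner_le[of _ "Z *v x"]
    by (simp add: symmetric_nash_def nash_eq_def)
qed

theorem lemma4p4:
  fixes A :: "real^'n^'n" and c d v x :: "real^'n" and lam p :: real
  assumes "A + transpose A = outer c d"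
    and "LP_optimal (A - (1/2) *\<^sub>R outer c d) c lam x p"
    and "v \<bullet> x = lam"
  shows "symmetric_nash ((A - (1/2) *\<^sub>R outer c d) + (1/2) *\<^sub>R outer c v) x"
proof -
  define K where "K = A - (1/2) *\<^sub>R outer c d"
  define Z where "Z = K + (1/2) *\<^sub>R outer c v"
  have K: "y \<bullet> (K *v y) = 0" for y
    unfolding K_def using assms(1) by (rule inner_skew_part_mult_vec_self_eq_0)
  have opt: "LP_optimal K c lam x p" using assms(2) by (simp add: K_def)
  then have x: "prob_vec x" and feasible: "\<And>i. (K *v x) $ i + lam / 2 * c $ i \<le> p"
    by (auto simp: LP_optimal_def LP_feasible_def)
  have Zx: "Z *v x = K *v x + (lam / 2) *\<^sub>R c"
    using assms(3) by (simp add: Z_def matrix_vector_mult_add_rdistrib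
        scaleR_matrix_vector_assoc[symmetric] outer_mult_vec)
  have "p \<le> x \<bullet> (Z *v x)"
    using LP_optimal_value_bound[OF K opt] K[of x] by (simp add: Zx inner_add_right)
  moreover have "(Z *v x) $ i \<le> p" for i
    using feasible[of i] by (simp add: Zx)
  ultimately have "(Z *v x) $ i \<le> x \<bullet> (Z *v x)" for i
    using order_trans by blast
  with x show ?thesis
    unfolding Z_def K_def by (rule symmetric_nashI)
qed

end
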